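(* Let $(\mathbf{X}_i, Z_i, Y_i)$, $i=1,\dots,n$, be the units of a survey sample, where $\mathbf{X}_i=(X_{i1},\dots,X_{iK})$ is a covariate vector, $Z_i\in\{0,1\}$ is the treatment indicator, and each unit has known sampling probability $p_{Z_i}(\mathbf{X}_i)\in(0,1)$, where $p_z(\mathbf{x}) = P(S=1\mid Z=z,\mathbf{X}=\mathbf{x})$. Suppose the population-level propensity score is estimated by survey-weighted logistic regression with an intercept, i.e. $\widehat{e}_{\text{sp}}(\mathbf{X}_i)=\operatorname{logit}^{-1}(\widehat{\beta}_0+\mathbf{X}_i\widehat{\boldsymbol{\beta}}_{sw}^{\top})$, where $(\widehat{\beta}_0,\widehat{\boldsymbol{\beta}}_{sw})$ is the weighted maximum likelihood estimator using survey weights $1/p_{Z_i}(\mathbf{X}_i)$, i.e. it solves $\sum_{i=1}^n \frac{1}{p_{Z_i}(\mathbf{X}_i)}\big(Z_i-\widehat{e}_{\text{sp}}(\mathbf{X}_i)\big)(1,\mathbf{X}_i)^{\top}=\mathbf{0}$. Then the survey-weighted overlap weights $\big((1-\widehat e_{\text{sp}}(\mathbf{X}_i))/p_1(\mathbf{X}_i)$ for treated units, $\widehat e_{\text{sp}}(\mathbf{X}_i)/p_0(\mathbf{X}_i)$ for control units$\big)$ give exact balance of the weighted means of every covariate: $$\frac{\sum_{i=1}^{n} X_{ik} Z_i (1-\widehat{e}_{\text{sp}}(\mathbf{X}_i))/p_1(\mathbf{X}_i)}{\sum_{i=1}^{n} Z_i (1-\widehat{e}_{\text{sp}}(\mathbf{X}_i))/p_1(\mathbf{X}_i)}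 = \frac{\sum_{i=1}^{n} X_{ik} (1-Z_i)\, \widehat{e}_{\text{sp}}(\mathbf{X}_i)/p_0(\mathbf{X}_i)}{\sum_{i=1}^{n} (1-Z_i)\, \widehat{e}_{\text{sp}}(\mathbf{X}_i)/p_0(\mathbf{X}_i)}, \quad k=1,\dots,K,$$ whenever the denominators are nonzero.
   Context: Setting: a sample of size $n$ is drawn from a superpopulation; $S\in\{0,1\}$ indicates selection into the sample. Treatment $Z$ is assigned before sampling (retrospective design), so sampling probabilities $p_z(\mathbf{x})=P(S=1\mid Z=z,\mathbf{X}=\mathbf{x})$ may depend on treatment and covariates; these are known for sampled units and their inverses are the survey weights. The population-level propensity score is $e_{\text{sp}}(\mathbf{x})=P(Z=1\mid \mathbf{X}=\mathbf{x})$. *)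

theory Defs
  imports "HOL-Analysis.Analysis"
begin

definition inv_logit :: "real \<Rightarrow> real" where
  "inv_logit t = 1 / (1 + exp (- t))"

definition e_hat :: "nat \<Rightarrow> real \<Rightarrow> (nat \<Rightarrow> real) \<Rightarrow> (nat \<Rightarrow> real) \<Rightarrow> real" where
  "e_hat K b0 b x = inv_logit (b0 + (\<Sum>k=1..K. x k * b k))"

end

theory Submission
  imports Defs
begin

text \<open>For a binary treatment Z, the survey-weighted logistic residual (Z - e)/p of a unit equals
  its treated overlap weight Z (1 - e)/p1 minus its control overlap weight (1 - Z) e/p0.
  Hence the score equation for the intercept says that the overlap weights of both arms have the
  same total, and the score equation for covariate k says that X_k has the same overlap-weighted
  total in both arms; dividing the two gives balance. Neither the logistic form of e nor the
  range of the sampling probabilities plays a role.\<close>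

lemma survey_residual_eq_overlap_weight_diff:
  fixes z e q0 q1 :: real
  assumes "z = 0 \<or> z = 1"
  shows "1 / (if z = 1 then q1 else q0) * (z - e) = z * (1 - e) / q1 - (1 - z) * e / q0"
  using assms by (auto simp: field_simps)

lemma overlap_weighted_sums_eq_if_score_zero:
  fixes Z e q0 q1 c :: "'a \<Rightarrow> real"
  assumes "\<forall>i\<in>I. Z i = 0 \<or> Z i = 1"
    and "(\<Sum>i\<in>I. 1 / (if Z i = 1 then q1 i else q0 i) * (Z i - e i) * c i) = 0"
  shows "(\<Sum>i\<in>I. c i * Z i * (1 - e i) / q1 i) = (\<Sum>i\<in>I. c i * (1 - Z i) * e i / q0 i)"
proof -
  have "(\<Sum>i\<in>I. 1 / (if Z i = 1 then q1 i else q0 i) * (Z i - e i) * c i)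
      = (\<Sum>i\<in>I. c i * Z i * (1 - e i) / q1 i - c i * (1 - Z i) * e i / q0 i)"
  proof (rule sum.cong)
    fix i assume "i \<in> I"
    then have "1 / (if Z i = 1 then q1 i else q0 i) * (Z i - e i) * c i
        = (Z i * (1 - e i) / q1 i - (1 - Z i) * e i / q0 i) * c i"
      using assms(1) survey_residual_eq_overlap_weight_diff by simp
    then show "1 / (if Z i = 1 then q1 i else q0 i) * (Z i - e i) * c i
        = c i * Z i * (1 - e i) / q1 i - c i * (1 - Z i) * e i / q0 i"
      by (simp add: right_diff_distrib mult_ac)
  qed simp
  with assms(2) show ?thesis
    by (simp add: sum_subtractf)
qed

theorem proposition1:
  fixes n K :: nat
    and X :: "nat \<Rightarrow> nat \<Rightarrow> real"
    and Z :: "nat \<Rightarrow> real"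
    and p0 p1 :: "(nat \<Rightarrow> real) \<Rightarrow> real"
    and b0 :: real and b :: "nat \<Rightarrow> real"
  defines "p \<equiv> (\<lambda>i. if Z i = 1 then p1 (X i) else p0 (X i))"
      and "e \<equiv> (\<lambda>i. e_hat K b0 b (X i))"
  assumes Z01: "\<forall>i\<in>{1..n}. Z i = 0 \<or> Z i = 1"
    and p_range: "\<forall>i\<in>{1..n}. 0 < p i \<and> p i < 1"
    and score0: "(\<Sum>i=1..n. (1 / p i) * (Z i - e i)) = 0"
    and scorek: "\<forall>k\<in>{1..K}. (\<Sum>i=1..n. (1 / p i) * (Z i - e i) * X i k) = 0"
    and k_range: "k \<in> {1..K}"
    and den1: "(\<Sum>i=1..n. Z i * (1 - e i) / p1 (X i)) \<noteq> 0"
    and den0: "(\<Sum>i=1..n. (1 - Z i) * e i / p0 (X i)) \<noteq> 0"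
  shows "(\<Sum>i=1..n. X i k * Z i * (1 - e i) / p1 (X i)) / (\<Sum>i=1..n. Z i * (1 - e i) / p1 (X i))
       = (\<Sum>i=1..n. X i k * (1 - Z i) * e i / p0 (X i)) / (\<Sum>i=1..n. (1 - Z i) * e i / p0 (X i))"
proof -
  have denominators: "(\<Sum>i=1..n. Z i * (1 - e i) / p1 (X i))
      = (\<Sum>i=1..n. (1 - Z i) * e i / p0 (X i))"
    using overlap_weighted_sums_eq_if_score_zero[where c = "\<lambda>_. 1"
        and ?q1.0 = "\<lambda>i. p1 (X i)" and ?q0.0 = "\<lambda>i. p0 (X i)", OF Z01]
      score0 by (simp add: p_def)
  have numerators: "(\<Sum>i=1..n. X i k * Z i * (1 - e i) / p1 (X i))
      = (\<Sum>i=1..n. X i k * (1 - Z i) * e i / p0 (X i))"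
    using overlap_weighted_sums_eq_if_score_zero[where c = "\<lambda>i. X i k"
        and ?q1.0 = "\<lambda>i. p1 (X i)" and ?q0.0 = "\<lambda>i. p0 (X i)", OF Z01]
      scorek k_range by (simp add: p_def)
  show ?thesis
    using denominators numerators by simp
qed

end
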